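(* For every positive integer $m$ there exists a circle graph with $m^2$ vertices whose rank-width is at least $m/4$ (namely the $m\times m$ comparability grid). In particular, there is no upper bound on the rank-width of $n$-vertex circle graphs of order $o(\sqrt n)$.
   Context: A circle graph is a graph isomorphic to the intersection graph of finitely many chords of a circle. The $m\times m$ comparability grid is the simple graph on $\{1,\dots,m\}^2$ with distinct $(i,j),(i',j')$ adjacent iff ($i\le i'$ and $j\le j'$) or ($i\ge i'$ and $j\ge j'$); it is a circle graph. For $X\subseteq V(G)$, the cut-rank $r(X)$ is the $\mathrm{GF}(2)$-rank of the adjacency submatrix with rows $X$ and columns $V(G)\setminus X$. A rank-decomposition is a tree with all degrees in $\{1,3\}$ whose leaves are in bijection with $V(G)$; each tree edge $e$ induces a bipartition $(X_e,Y_e)$ of $V(G)$ of width $r(X_e)$; rank-width is the minimum over rank-decompositions of the maximum edge width. *)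

theory Defs
  imports "HOL-Analysis.Analysis" "HOL-Library.Landau_Symbols"
begin

text \<open>A graph is a finite vertex set V with a symmetric irreflexive adjacency relation E
  (only its restriction to V matters).\<close>

definition simple_graph :: "'a set \<Rightarrow> ('a \<Rightarrow> 'a \<Rightarrow> bool) \<Rightarrow> bool" where
  "simple_graph V E \<longleftrightarrow> finite V \<and> (\<forall>x y. E x y \<longrightarrow> E y x) \<and> (\<forall>x. \<not> E x x)"

text \<open>G is a circle graph iff it is isomorphic to the
  intersection graph of finitely many (pairwise distinct) chords.\<close>

definition circle_graph :: "'a set \<Rightarrow> ('a \<Rightarrow> 'a \<Rightarrow> bool) \<Rightarrow> bool" where
  "circle_graph V E \<longleftrightarrow> simple_graph V E \<and>
     (\<exists>a b :: 'a \<Rightarrow> complex.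
        (\<forall>v\<in>V. norm (a v) = 1 \<and> norm (b v) = 1 \<and> a v \<noteq> b v) \<and>
        inj_on (\<lambda>v. closed_segment (a v) (b v)) V \<and>
        (\<forall>v\<in>V. \<forall>w\<in>V. v \<noteq> w \<longrightarrow>
            (E v w \<longleftrightarrow> closed_segment (a v) (b v) \<inter> closed_segment (a w) (b w) \<noteq> {})))"

definition comp_grid_V :: "nat \<Rightarrow> (nat \<times> nat) set" where
  "comp_grid_V m = {1..m} \<times> {1..m}"

definition comp_grid_E :: "(nat \<times> nat) \<Rightarrow> (nat \<times> nat) \<Rightarrow> bool" where
  "comp_grid_E p q \<longleftrightarrow> p \<noteq> q \<and>
     ((fst p \<le> fst q \<and> snd p \<le> snd q) \<or> (fst p \<ge> fst q \<and> snd p \<ge> snd q))"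

text \<open>A set S of rows (indexed by vertices of X) of the X \<times> (V - X) adjacency matrix is
  linearly independent over GF(2) iff no nonempty subset of them sums to the zero vector,
  i.e. for each nonempty T \<subseteq> S some column y has an odd number of ones among the rows in T.\<close>

definition gf2_indep_rows :: "'a set \<Rightarrow> ('a \<Rightarrow> 'a \<Rightarrow> bool) \<Rightarrow> 'a set \<Rightarrow> 'a set \<Rightarrow> bool" where
  "gf2_indep_rows V E X S \<longleftrightarrow> S \<subseteq> X \<and>
     (\<forall>T. T \<subseteq> S \<longrightarrow> T \<noteq> {} \<longrightarrow> (\<exists>y \<in> V - X. odd (card {x\<in>T. E x y})))"

definition cut_rank :: "'a set \<Rightarrow> ('a \<Rightarrow> 'a \<Rightarrow> bool) \<Rightarrow> 'a set \<Rightarrow> nat" where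
  "cut_rank V E X = Max (card ` {S. gf2_indep_rows V E X S})"

definition tree_edges :: "nat set \<Rightarrow> (nat \<Rightarrow> nat \<Rightarrow> bool) \<Rightarrow> nat set set" where
  "tree_edges N T = {{s, t} | s t. s \<in> N \<and> t \<in> N \<and> T s t}"

definition is_tree :: "nat set \<Rightarrow> (nat \<Rightarrow> nat \<Rightarrow> bool) \<Rightarrow> bool" where
  "is_tree N T \<longleftrightarrow> finite N \<and> N \<noteq> {} \<and>
     (\<forall>s t. T s t \<longrightarrow> T t s) \<and> (\<forall>s. \<not> T s s) \<and> (\<forall>s t. T s t \<longrightarrow> s \<in> N \<and> t \<in> N) \<and>
     (\<forall>s\<in>N. \<forall>t\<in>N. T\<^sup>*\<^sup>* s t) \<and>
     card (tree_edges N T) = card N - 1"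

definition tree_degree :: "nat set \<Rightarrow> (nat \<Rightarrow> nat \<Rightarrow> bool) \<Rightarrow> nat \<Rightarrow> nat" where
  "tree_degree N T s = card {t\<in>N. T s t}"

definition tree_leaves :: "nat set \<Rightarrow> (nat \<Rightarrow> nat \<Rightarrow> bool) \<Rightarrow> nat set" where
  "tree_leaves N T = {s\<in>N. tree_degree N T s = 1}"

definition rank_decomposition ::
  "'a set \<Rightarrow> nat set \<Rightarrow> (nat \<Rightarrow> nat \<Rightarrow> bool) \<Rightarrow> ('a \<Rightarrow> nat) \<Rightarrow> bool" where
  "rank_decomposition V N T L \<longleftrightarrow> is_tree N T \<and>
     (\<forall>s\<in>N. tree_degree N T s \<in> {1, 3}) \<and> bij_betw L V (tree_leaves N T)"

text \<open>The side X_e of the bipartition induced by tree edge e = st: the vertices whose leaves lie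
  in the component of s after deleting e.\<close>

definition edge_side :: "'a set \<Rightarrow> (nat \<Rightarrow> nat \<Rightarrow> bool) \<Rightarrow> ('a \<Rightarrow> nat) \<Rightarrow> nat \<Rightarrow> nat \<Rightarrow> 'a set" where
  "edge_side V T L s t =
     {v\<in>V. (\<lambda>x y. T x y \<and> {x, y} \<noteq> {s, t})\<^sup>*\<^sup>* s (L v)}"

definition decomposition_width ::
  "'a set \<Rightarrow> ('a \<Rightarrow> 'a \<Rightarrow> bool) \<Rightarrow> nat set \<Rightarrow> (nat \<Rightarrow> nat \<Rightarrow> bool) \<Rightarrow> ('a \<Rightarrow> nat) \<Rightarrow> nat" where
  "decomposition_width V E N T L =
     Max ({0} \<union> {cut_rank V E (edge_side V T L s t) | s t. s \<in> N \<and> t \<in> N \<and> T s t})"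

text \<open>Rank-width: minimum width over all rank-decompositions. Graphs with at most one vertex
  have no rank-decomposition; by the standard convention their rank-width is 0.\<close>

definition rank_width :: "'a set \<Rightarrow> ('a \<Rightarrow> 'a \<Rightarrow> bool) \<Rightarrow> nat" where
  "rank_width V E = (if card V \<le> 1 then 0 else
     (LEAST k. \<exists>N T L. rank_decomposition V N T L \<and> decomposition_width V E N T L = k))"

end

theory Submission
  imports Defs "HOL-Library.Nat_Bijection"
begin

(* The comparability grid is a circle graph: put the endpoints of the chord of cell (i, j) on two
   disjoint arcs, ordered along the first arc by rows and along the second by columns. Two chords
   then cross iff the two orders agree on their cells, i.e. iff the cells are comparable.

   For the rank-width bound, every rank-decomposition of an n-vertex graph has a tree edge whose
   two sides both have at least n/3 vertices. For a cut (X, Y) of the m x m grid with both sides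
   of size at least m^2/4, at least m/2 rows or at least m/2 columns meet both X and Y. Each such
   row yields a row of the cut matrix paired with a column, and the pairs form two triangular
   submatrices with ones on the diagonal (according to whether the first cell of the row lies in
   X), so the cut-rank is at least m/4. Since the grid has n = m^2 vertices, rank-width can grow
   like sqrt n / 4 on circle graphs. *)

section \<open>Crossing segments\<close>

text \<open>Twice the signed area of the triangle \<open>A B C\<close>.\<close>

definition orientation :: "complex \<Rightarrow> complex \<Rightarrow> complex \<Rightarrow> real" where
  "orientation A B C = (Re B - Re A) * (Im C - Im A) - (Im B - Im A) * (Re C - Re A)"

lemma orientation_convex_comb:
  "orientation C D ((1 - u) *\<^sub>R A + u *\<^sub>R B) = (1 - u) * orientation C D A + u * orientation C D B"
  by (simp add: orientation_def algebra_simps)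

lemma orientation_on_line: "orientation C D ((1 - v) *\<^sub>R C + v *\<^sub>R D) = 0"
  by (simp add: orientation_def algebra_simps)

lemma convex_comb_same_sign_nonzero:
  fixes p q u :: real
  assumes "p * q > 0" "0 \<le> u" "u \<le> 1"
  shows "(1 - u) * p + u * q \<noteq> 0"
proof -
  consider "p > 0" "q > 0" | "p < 0" "q < 0" using assms(1) by (auto simp: zero_less_mult_iff)
  then show ?thesis
  proof cases
    case 1
    then have "(1 - u) * - p + u * - q < 0" by (intro convex_bound_lt) (use assms in auto)
    then show ?thesis by simp
  next
    case 2
    then have "(1 - u) * p + u * q < 0" by (intro convex_bound_lt) (use assms in auto)
    then show ?thesis by simp
  qed
qed

lemma convex_comb_opposite_sign_zero:
  fixes p q :: real
  assumes "p * q < 0"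
  obtains u where "0 \<le> u" "u \<le> 1" "(1 - u) * p + u * q = 0"
proof
  have "p \<noteq> q" using assms by auto
  then show "(1 - p / (p - q)) * p + p / (p - q) * q = 0"
    by (simp add: field_simps)
  show "0 \<le> p / (p - q)" "p / (p - q) \<le> 1"
    using assms by (auto simp: mult_less_0_iff divide_simps)
qed

lemma closed_segments_disjoint_if_same_side:
  assumes "orientation C D A * orientation C D B > 0"
  shows "closed_segment A B \<inter> closed_segment C D = {}"
proof (rule ccontr)
  assume "closed_segment A B \<inter> closed_segment C D \<noteq> {}"
  then obtain u v where u: "0 \<le> u" "u \<le> 1"
    and meet: "(1 - u) *\<^sub>R A + u *\<^sub>R B = (1 - v) *\<^sub>R C + v *\<^sub>R D"
    by (auto simp: in_segment)
  have "(1 - u) * orientation C D A + u * orientation C D B = 0"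
    using orientation_on_line[of C D v] by (simp add: meet [symmetric] orientation_convex_comb)
  with convex_comb_same_sign_nonzero[OF assms u] show False by simp
qed

lemma common_point_of_lines_unique:
  assumes "orientation A B z = 0" "orientation A B w = 0" "orientation C D z = 0" "orientation C D w = 0"
    and nonparallel: "orientation A B C \<noteq> orientation A B D"
  shows "z = w"
proof -
  define e1 e2 f1 f2 d1 d2 where "e1 = Re B - Re A" "e2 = Im B - Im A" "f1 = Re D - Re C"
    "f2 = Im D - Im C" "d1 = Re z - Re w" "d2 = Im z - Im w"
  have h1: "e1 * d2 - e2 * d1 = 0" and h2: "f1 * d2 - f2 * d1 = 0"
    using assms(1-4) unfolding orientation_def e1_e2_f1_f2_d1_d2_def by (simp_all add: algebra_simps)
  have det: "e1 * f2 - e2 * f1 \<noteq> 0"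
    using nonparallel unfolding orientation_def e1_e2_f1_f2_d1_d2_def by (simp add: algebra_simps)
  have "(e1 * f2 - e2 * f1) * d2 = f2 * (e1 * d2 - e2 * d1) - e2 * (f1 * d2 - f2 * d1)"
    "(e1 * f2 - e2 * f1) * d1 = f1 * (e1 * d2 - e2 * d1) - e1 * (f1 * d2 - f2 * d1)"
    by (simp_all add: algebra_simps)
  with h1 h2 have "(e1 * f2 - e2 * f1) * d2 = 0" "(e1 * f2 - e2 * f1) * d1 = 0" by simp_all
  with det have "d1 = 0" "d2 = 0" by simp_all
  then show ?thesis unfolding e1_e2_f1_f2_d1_d2_def by (simp add: complex_eq_iff)
qed

lemma closed_segments_meet_if_opposite_sides:
  assumes "orientation C D A * orientation C D B < 0" "orientation A B C * orientation A B D < 0"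
  shows "closed_segment A B \<inter> closed_segment C D \<noteq> {}"
proof -
  obtain u where u: "0 \<le> u" "u \<le> 1" "(1 - u) * orientation C D A + u * orientation C D B = 0"
    using convex_comb_opposite_sign_zero[OF assms(1)] .
  obtain v where v: "0 \<le> v" "v \<le> 1" "(1 - v) * orientation A B C + v * orientation A B D = 0"
    using convex_comb_opposite_sign_zero[OF assms(2)] .
  define z where "z = (1 - u) *\<^sub>R A + u *\<^sub>R B"
  define w where "w = (1 - v) *\<^sub>R C + v *\<^sub>R D"
  have "z = w"
  proof (rule common_point_of_lines_unique)
    show "orientation A B z = 0" "orientation C D w = 0"
      unfolding z_def w_def by (rule orientation_on_line)+
    show "orientation A B w = 0" "orientation C D z = 0"
      unfolding z_def w_def orientation_convex_comb by (fact v(3) u(3))+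
    show "orientation A B C \<noteq> orientation A B D" using assms(2) by auto
  qed
  moreover have "z \<in> closed_segment A B" "w \<in> closed_segment C D"
    unfolding z_def w_def in_segment using u v by auto
  ultimately show ?thesis by blast
qed

text \<open>Inverse stereographic projection of the real line onto the unit circle minus the point -1.\<close>

definition circle_point :: "real \<Rightarrow> complex" where
  "circle_point x = Complex ((1 - x\<^sup>2) / (1 + x\<^sup>2)) (2 * x / (1 + x\<^sup>2))"

lemma one_plus_square_pos: "(1::real) + x\<^sup>2 > 0"
  by (simp add: add_pos_nonneg)

lemma norm_circle_point: "norm (circle_point x) = 1"
proof -
  have "(1 - x\<^sup>2)\<^sup>2 + (2 * x)\<^sup>2 = (1 + x\<^sup>2)\<^sup>2" by algebra
  then have "((1 - x\<^sup>2) / (1 + x\<^sup>2))\<^sup>2 + (2 * x / (1 + x\<^sup>2))\<^sup>2 = 1"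
    using one_plus_square_pos[of x] by (simp add: power_divide add_divide_distrib [symmetric])
  then show ?thesis by (simp add: circle_point_def cmod_def)
qed

lemma inj_circle_point: "inj circle_point"
proof (rule injI)
  fix a b assume eq: "circle_point a = circle_point b"
  have pos: "1 + a\<^sup>2 \<noteq> 0" "1 + b\<^sup>2 \<noteq> 0" using one_plus_square_pos[of a] one_plus_square_pos[of b] by auto
  have "(1 - a\<^sup>2) / (1 + a\<^sup>2) = (1 - b\<^sup>2) / (1 + b\<^sup>2)" using arg_cong[OF eq, of Re] by (simp add: circle_point_def)
  then have "(1 - a\<^sup>2) * (1 + b\<^sup>2) = (1 - b\<^sup>2) * (1 + a\<^sup>2)" using pos by (simp add: divide_simps)
  then have sq: "a\<^sup>2 = b\<^sup>2" by algebra
  have "2 * a / (1 + a\<^sup>2) = 2 * b / (1 + b\<^sup>2)" using arg_cong[OF eq, of Im] by (simp add: circle_point_def)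
  with sq pos show "a = b" by (simp add: divide_simps)
qed

lemma orientation_circle_point:
  "orientation (circle_point a) (circle_point b) (circle_point c) =
     4 * (b - a) * (c - b) * (c - a) / ((1 + a\<^sup>2) * (1 + b\<^sup>2) * (1 + c\<^sup>2))"
proof -
  define Da Db Dc where "Da = 1 + a\<^sup>2" "Db = 1 + b\<^sup>2" "Dc = 1 + c\<^sup>2"
  have nz: "Da \<noteq> 0" "Db \<noteq> 0" "Dc \<noteq> 0"
    unfolding Da_Db_Dc_def using one_plus_square_pos by (metis less_irrefl)+
  have "orientation (circle_point a) (circle_point b) (circle_point c) =
    ((1-b\<^sup>2)/Db - (1-a\<^sup>2)/Da)*(2*c/Dc - 2*a/Da) - (2*b/Db - 2*a/Da)*((1-c\<^sup>2)/Dc - (1-a\<^sup>2)/Da)"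
    unfolding orientation_def circle_point_def Da_Db_Dc_def by simp
  also have "\<dots> = (((1-b\<^sup>2)*Da - (1-a\<^sup>2)*Db)*(2*c*Da - 2*a*Dc) - (2*b*Da - 2*a*Db)*((1-c\<^sup>2)*Da - (1-a\<^sup>2)*Dc))
      / (Da*Da*Db*Dc)"
    using nz by (simp add: field_simps)
  also have "((1-b\<^sup>2)*Da - (1-a\<^sup>2)*Db)*(2*c*Da - 2*a*Dc) - (2*b*Da - 2*a*Db)*((1-c\<^sup>2)*Da - (1-a\<^sup>2)*Dc)
     = Da * (4*(b-a)*(c-b)*(c-a))"
    unfolding Da_Db_Dc_def by algebra
  finally show ?thesis using nz unfolding Da_Db_Dc_def by simp
qed

lemma orientation_circle_point_product:
  assumes "a \<noteq> b"
  obtains k where "k > 0"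
    "orientation (circle_point a) (circle_point b) (circle_point c) *
     orientation (circle_point a) (circle_point b) (circle_point d) = k * ((c - a) * (c - b) * (d - a) * (d - b))"
proof
  define k where "k = 16 * (b - a)\<^sup>2 /
    (((1 + a\<^sup>2) * (1 + b\<^sup>2) * (1 + c\<^sup>2)) * ((1 + a\<^sup>2) * (1 + b\<^sup>2) * (1 + d\<^sup>2)))"
  show "k > 0" unfolding k_def using assms one_plus_square_pos
    by (intro divide_pos_pos mult_pos_pos) auto
  show "orientation (circle_point a) (circle_point b) (circle_point c) *
     orientation (circle_point a) (circle_point b) (circle_point d) = k * ((c - a) * (c - b) * (d - a) * (d - b))"
    unfolding orientation_circle_point k_def by (simp add: power2_eq_square field_simps)
qed

text \<open>Two chords with four distinct endpoints on the circle cross iff their endpoints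
  interleave; in parameters, iff exactly one of \<open>c\<close>, \<open>d\<close> lies between \<open>a\<close> and \<open>b\<close>.\<close>

lemma circle_chords_meet_iff:
  fixes a b c d :: real
  assumes "a \<noteq> b" "c \<noteq> d" "a \<noteq> c" "a \<noteq> d" "b \<noteq> c" "b \<noteq> d"
  shows "closed_segment (circle_point a) (circle_point b) \<inter> closed_segment (circle_point c) (circle_point d) \<noteq> {}
     \<longleftrightarrow> (c - a) * (c - b) * (d - a) * (d - b) < 0"
    (is "_ \<longleftrightarrow> ?Q < 0")
proof -
  obtain k where "k > 0" and k: "orientation (circle_point a) (circle_point b) (circle_point c) *
      orientation (circle_point a) (circle_point b) (circle_point d) = k * ?Q"
    using orientation_circle_point_product[OF assms(1)] .
  have swap: "(a - c) * (a - d) * (b - c) * (b - d) = ?Q" by (simp add: algebra_simps)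
  obtain k' where "k' > 0" and k': "orientation (circle_point c) (circle_point d) (circle_point a) *
      orientation (circle_point c) (circle_point d) (circle_point b) = k' * ?Q"
    using orientation_circle_point_product[OF assms(2), of a b] unfolding swap .
  have "?Q \<noteq> 0" using assms by auto
  then consider "?Q < 0" | "?Q > 0" by linarith
  then show ?thesis
  proof cases
    case 1
    then have "closed_segment (circle_point a) (circle_point b) \<inter> closed_segment (circle_point c) (circle_point d) \<noteq> {}"
      using \<open>k > 0\<close> \<open>k' > 0\<close> by (intro closed_segments_meet_if_opposite_sides) (simp_all add: k k' mult_pos_neg)
    with 1 show ?thesis by simp
  next
    case 2
    then have "closed_segment (circle_point a) (circle_point b) \<inter> closed_segment (circle_point c) (circle_point d) = {}"
      using \<open>k' > 0\<close> by (intro closed_segments_disjoint_if_same_side) (simp add: k')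
    with 2 show ?thesis by simp
  qed
qed

section \<open>The comparability grid is a circle graph\<close>

lemma exp_diff_mult_pos_iff:
  fixes x y x' y' :: real
  shows "(exp x - exp y) * (exp (- y') - exp (- x')) > 0 \<longleftrightarrow> (x - y) * (x' - y') > 0"
proof -
  have "exp x - exp y > 0 \<longleftrightarrow> x - y > 0" "exp x - exp y < 0 \<longleftrightarrow> x - y < 0"
    "exp (- y') - exp (- x') > 0 \<longleftrightarrow> x' - y' > 0" "exp (- y') - exp (- x') < 0 \<longleftrightarrow> x' - y' < 0"
    by (simp_all add: less_diff_eq diff_less_eq)
  then show ?thesis unfolding zero_less_mult_iff by blast
qed

text \<open>The graph in which two vertices are adjacent iff \<open>f\<close> and \<open>g\<close> order them the same way
  is a circle graph: vertex \<open>v\<close> becomes the chord from the parameter \<open>exp (f v) > 0\<close> to the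
  parameter \<open>- exp (- g v) < 0\<close>.\<close>

lemma circle_graph_if_adjacent_iff_concordant:
  fixes f g :: "'a \<Rightarrow> real"
  assumes "simple_graph V E" and inj: "inj_on f V" "inj_on g V"
    and adj: "\<And>v w. v \<in> V \<Longrightarrow> w \<in> V \<Longrightarrow> v \<noteq> w \<Longrightarrow> E v w \<longleftrightarrow> (f w - f v) * (g w - g v) > 0"
  shows "circle_graph V E"
proof -
  define a b where "a v = exp (f v)" "b v = - exp (- g v)" for v
  define chord where "chord = (\<lambda>v. closed_segment (circle_point (a v)) (circle_point (b v)))"
  have ab: "a v > 0" "b v < 0" for v unfolding a_b_def by auto
  have on_circle: "norm (circle_point (a v)) = 1 \<and> norm (circle_point (b v)) = 1 \<and>
      circle_point (a v) \<noteq> circle_point (b v)" for v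
    using ab[of v] inj_circle_point by (auto simp: norm_circle_point dest: injD)
  have inj_chord: "inj_on chord V"
  proof (rule inj_onI)
    fix v w assume "v \<in> V" "w \<in> V" "chord v = chord w"
    then have "circle_point (a v) \<in> {circle_point (a w), circle_point (b w)}"
      unfolding chord_def by (metis closed_segment_eq insertI1)
    then have "a v = a w" using inj_circle_point ab[of v] ab[of w] by (auto dest: injD)
    with \<open>v \<in> V\<close> \<open>w \<in> V\<close> show "v = w" using inj_onD[OF inj(1)] by (simp add: a_b_def)
  qed
  have adj_chord: "E v w \<longleftrightarrow> chord v \<inter> chord w \<noteq> {}" if vw: "v \<in> V" "w \<in> V" "v \<noteq> w" for v w
  proof -
    have "f v \<noteq> f w" "g v \<noteq> g w" using vw inj by (auto dest: inj_onD)
    then have "a v \<noteq> a w" "b v \<noteq> b w" by (simp_all add: a_b_def)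
    then have distinct: "a v \<noteq> b v" "a w \<noteq> b w" "a v \<noteq> a w" "a v \<noteq> b w" "b v \<noteq> a w" "b v \<noteq> b w"
      using ab[of v] ab[of w] by auto
    have "(a w - b v) * (b w - a v) < 0" using ab[of v] ab[of w] by (simp add: mult_pos_neg)
    then have "(a w - a v) * (a w - b v) * (b w - a v) * (b w - b v) < 0 \<longleftrightarrow> (a w - a v) * (b w - b v) > 0"
      by (auto simp: mult_less_0_iff zero_less_mult_iff)
    also have "\<dots> \<longleftrightarrow> E v w"
      using adj[OF vw] exp_diff_mult_pos_iff by (simp add: a_b_def)
    finally show ?thesis
      unfolding chord_def using circle_chords_meet_iff[OF distinct] by simp
  qed
  show ?thesis
    unfolding circle_graph_def
    apply (rule conjI[OF \<open>simple_graph V E\<close>])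
    apply (rule exI[of _ "\<lambda>v. circle_point (a v)"], rule exI[of _ "\<lambda>v. circle_point (b v)"])
    using on_circle inj_chord adj_chord by (simp add: chord_def)
qed

lemma mult_add_less_mult_add_iff:
  fixes i j i' j' b :: nat
  assumes "j < b" "j' < b"
  shows "i * b + j < i' * b + j' \<longleftrightarrow> i < i' \<or> (i = i' \<and> j < j')"
proof -
  have less: "i * b + j < i' * b + j'" if "i < i'" "j < b" for i i' j j' :: nat
  proof -
    have "Suc i * b \<le> i' * b" using that(1) by (intro mult_right_mono) auto
    then show ?thesis using that(2) by simp
  qed
  show ?thesis using less[of i i' j j'] less[of i' i j' j] assms by (cases i i' rule: linorder_cases) auto
qed

lemma comp_grid_circle_graph: "circle_graph (comp_grid_V m) comp_grid_E"
proof -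
  define f g :: "nat \<times> nat \<Rightarrow> real"
    where "f p = real (fst p * (m + 1) + snd p)" and "g p = real (snd p * (m + 1) + fst p)" for p
  have less: "f p < f q \<longleftrightarrow> fst p < fst q \<or> (fst p = fst q \<and> snd p < snd q)"
    "g p < g q \<longleftrightarrow> snd p < snd q \<or> (snd p = snd q \<and> fst p < fst q)"
    if "p \<in> comp_grid_V m" "q \<in> comp_grid_V m" for p q
  proof -
    have "fst p < m + 1" "snd p < m + 1" "fst q < m + 1" "snd q < m + 1"
      using that by (auto simp: comp_grid_V_def)
    then show "f p < f q \<longleftrightarrow> fst p < fst q \<or> (fst p = fst q \<and> snd p < snd q)"
      "g p < g q \<longleftrightarrow> snd p < snd q \<or> (snd p = snd q \<and> fst p < fst q)"
      unfolding f_def g_def of_nat_less_iff by (simp_all only: mult_add_less_mult_add_iff)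
  qed
  have inj: "inj_on f (comp_grid_V m)" "inj_on g (comp_grid_V m)"
  proof -
    have "fst p = fst q" "snd p = snd q"
      if "p \<in> comp_grid_V m" "q \<in> comp_grid_V m" "f p = f q \<or> g p = g q" for p q
      using less[OF that(1,2)] less[OF that(2,1)] that(3) by (metis less_irrefl linorder_neqE_nat)+
    then show "inj_on f (comp_grid_V m)" "inj_on g (comp_grid_V m)"
      by (meson inj_onI prod_eqI)+
  qed
  show ?thesis
  proof (rule circle_graph_if_adjacent_iff_concordant[OF _ inj])
    show "simple_graph (comp_grid_V m) comp_grid_E"
      unfolding simple_graph_def comp_grid_E_def comp_grid_V_def by auto
    fix p q assume pq: "p \<in> comp_grid_V m" "q \<in> comp_grid_V m" "p \<noteq> q"
    have "(f q - f p) * (g q - g p) > 0 \<longleftrightarrow> (f p < f q \<and> g p < g q) \<or> (f q < f p \<and> g q < g p)"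
      by (auto simp: zero_less_mult_iff)
    also have "\<dots> \<longleftrightarrow> comp_grid_E p q"
    proof -
      have "fst p \<noteq> fst q \<or> snd p \<noteq> snd q" using pq(3) by (simp add: prod_eq_iff)
      then have "f p < f q \<and> g p < g q \<longleftrightarrow> fst p \<le> fst q \<and> snd p \<le> snd q"
        "f q < f p \<and> g q < g p \<longleftrightarrow> fst q \<le> fst p \<and> snd q \<le> snd p"
        unfolding less[OF pq(1,2)] less[OF pq(2,1)] by linarith+
      then show ?thesis unfolding comp_grid_E_def using pq(3) by simp
    qed
    finally show "comp_grid_E p q \<longleftrightarrow> (f q - f p) * (g q - g p) > 0" ..
  qed
qed

lemma circle_graph_relabel:
  assumes "circle_graph V E" and inv: "\<And>v. v \<in> V \<Longrightarrow> g (h v) = v"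
  shows "circle_graph (h ` V) (\<lambda>x y. E (g x) (g y))"
proof -
  obtain a b :: "_ \<Rightarrow> complex" where
    ends: "\<forall>v\<in>V. norm (a v) = 1 \<and> norm (b v) = 1 \<and> a v \<noteq> b v"
    and inj: "inj_on (\<lambda>v. closed_segment (a v) (b v)) V"
    and adj: "\<forall>v\<in>V. \<forall>w\<in>V. v \<noteq> w \<longrightarrow> (E v w \<longleftrightarrow> closed_segment (a v) (b v) \<inter> closed_segment (a w) (b w) \<noteq> {})"
    and "simple_graph V E"
    using assms(1) unfolding circle_graph_def by blast
  have "simple_graph (h ` V) (\<lambda>x y. E (g x) (g y))"
    using \<open>simple_graph V E\<close> unfolding simple_graph_def by blast
  moreover have "inj_on (\<lambda>x. closed_segment (a (g x)) (b (g x))) (h ` V)"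
    using inj inv unfolding inj_on_def by (metis (no_types, lifting) imageE)
  moreover have "E (g x) (g y) \<longleftrightarrow> closed_segment (a (g x)) (b (g x)) \<inter> closed_segment (a (g y)) (b (g y)) \<noteq> {}"
    if xy: "x \<in> h ` V" "y \<in> h ` V" "x \<noteq> y" for x y
  proof -
    obtain v w where vw: "v \<in> V" "w \<in> V" "x = h v" "y = h w" using xy(1,2) by blast
    with xy(3) have "v \<noteq> w" by blast
    with vw adj inv show ?thesis by simp
  qed
  ultimately show ?thesis
    unfolding circle_graph_def using ends inv
    by (intro conjI exI[of _ "a \<circ> g"] exI[of _ "b \<circ> g"]) auto
qed

section \<open>Cut-rank of the comparability grid\<close>

lemma card_le_cut_rank:
  assumes "finite X" "gf2_indep_rows V E X S"
  shows "card S \<le> cut_rank V E X"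
proof -
  have "{S. gf2_indep_rows V E X S} \<subseteq> Pow X" unfolding gf2_indep_rows_def by auto
  then have "finite {S. gf2_indep_rows V E X S}" using assms(1) finite_subset by blast
  then show ?thesis unfolding cut_rank_def using assms(2) by (auto intro!: Max_ge)
qed

text \<open>If the rows \<open>x k\<close> and columns \<open>y k\<close> can be paired so that the corresponding square
  submatrix is triangular with ones on the diagonal, its rows are independent: every nonempty
  set of them has a \<open>\<rho>\<close>-minimal row, whose column contains a single one.\<close>

lemma card_le_cut_rank_if_triangular:
  fixes x y :: "'k \<Rightarrow> 'a" and \<rho> :: "'k \<Rightarrow> 'b::order"
  assumes "finite X" "finite K" "inj_on x K" "x ` K \<subseteq> X" "y ` K \<subseteq> V - X"
    and diagonal: "\<And>k. k \<in> K \<Longrightarrow> E (x k) (y k)"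
    and triangular: "\<And>s t. s \<in> K \<Longrightarrow> t \<in> K \<Longrightarrow> s \<noteq> t \<Longrightarrow> E (x s) (y t) \<Longrightarrow> \<rho> s < \<rho> t"
  shows "card K \<le> cut_rank V E X"
proof -
  have "gf2_indep_rows V E X (x ` K)"
    unfolding gf2_indep_rows_def
  proof (intro conjI allI impI)
    show "x ` K \<subseteq> X" by fact
    fix T assume T: "T \<subseteq> x ` K" "T \<noteq> {}"
    define K' where "K' = {k \<in> K. x k \<in> T}"
    have "finite K'" "K' \<noteq> {}" using T \<open>finite K\<close> unfolding K'_def by auto
    define k0 where "k0 = arg_min_on \<rho> K'"
    have k0: "k0 \<in> K'" "\<not> (\<exists>k\<in>K'. \<rho> k < \<rho> k0)"
      unfolding k0_def using arg_min_if_finite[OF \<open>finite K'\<close> \<open>K' \<noteq> {}\<close>] by blast+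
    have "k = k0" if "k \<in> K'" "E (x k) (y k0)" for k
      using triangular[of k k0] k0 that unfolding K'_def by blast
    then have "{z \<in> T. E z (y k0)} = {x k0}"
      using k0(1) T(1) diagonal unfolding K'_def by blast
    moreover have "y k0 \<in> V - X" using k0(1) assms(5) unfolding K'_def by auto
    ultimately show "\<exists>y\<in>V - X. odd (card {x \<in> T. E x y})" by (auto intro!: bexI[of _ "y k0"])
  qed
  then show ?thesis using card_le_cut_rank[OF assms(1)] card_image[OF assms(3)] by metis
qed

definition mixed_rows :: "nat \<Rightarrow> (nat \<times> nat \<Rightarrow> bool) \<Rightarrow> nat set" where
  "mixed_rows m F = {r \<in> {1..m}. (\<exists>c\<in>{1..m}. F (r, c)) \<and> (\<exists>c\<in>{1..m}. \<not> F (r, c))}"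

lemma mixed_rows_subset: "mixed_rows m F \<subseteq> {1..m}"
  unfolding mixed_rows_def by auto

lemma mixed_rows_not: "mixed_rows m (\<lambda>p. \<not> F p) = mixed_rows m F"
  unfolding mixed_rows_def by auto

lemma nat_square_le_four_mult:
  fixes m a b :: nat
  assumes "m * m \<le> 4 * (a * b)"
  shows "m \<le> 2 * a \<or> m \<le> 2 * b"
proof (rule ccontr)
  assume "\<not> (m \<le> 2 * a \<or> m \<le> 2 * b)"
  then have "2 * a < m" "2 * b < m" by auto
  then have "(2 * a) * (2 * b) < m * m" by (intro mult_strict_mono) auto
  with assms show False by simp
qed

lemma mixed_rows_or_columns_large_if_lines_meet:
  assumes rows: "\<forall>r\<in>{1..m}. \<exists>c\<in>{1..m}. F (r, c)" and cols: "\<forall>c\<in>{1..m}. \<exists>r\<in>{1..m}. F (r, c)"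
    and large: "m\<^sup>2 \<le> 4 * card {p \<in> comp_grid_V m. \<not> F p}"
  shows "m \<le> 2 * card (mixed_rows m F) \<or> m \<le> 2 * card (mixed_rows m (F \<circ> prod.swap))"
proof -
  have "{p \<in> comp_grid_V m. \<not> F p} \<subseteq> mixed_rows m F \<times> mixed_rows m (F \<circ> prod.swap)"
    using rows cols unfolding mixed_rows_def comp_grid_V_def by auto
  moreover have "finite (mixed_rows m F \<times> mixed_rows m (F \<circ> prod.swap))"
    using finite_subset[OF mixed_rows_subset] by blast
  ultimately have "card {p \<in> comp_grid_V m. \<not> F p} \<le> card (mixed_rows m F) * card (mixed_rows m (F \<circ> prod.swap))"
    by (metis card_mono card_cartesian_product)
  with large show ?thesis by (intro nat_square_le_four_mult) (simp add: power2_eq_square)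
qed

text \<open>If some row \<open>r\<^sub>0\<close> and some column \<open>c\<^sub>0\<close> are not mixed, \<open>F\<close> is constant on both,
  so either \<open>F\<close> or its negation meets every row and every column.\<close>

lemma mixed_rows_or_columns_large:
  assumes "m\<^sup>2 \<le> 4 * card {p \<in> comp_grid_V m. F p}" "m\<^sup>2 \<le> 4 * card {p \<in> comp_grid_V m. \<not> F p}"
  shows "m \<le> 2 * card (mixed_rows m F) \<or> m \<le> 2 * card (mixed_rows m (F \<circ> prod.swap))"
proof (cases "mixed_rows m F = {1..m} \<or> mixed_rows m (F \<circ> prod.swap) = {1..m}")
  case True
  then show ?thesis by auto
next
  case False
  then obtain r0 c0 where r0: "r0 \<in> {1..m}" "r0 \<notin> mixed_rows m F"
    and c0: "c0 \<in> {1..m}" "c0 \<notin> mixed_rows m (F \<circ> prod.swap)"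
    using mixed_rows_subset by blast
  then have row: "\<forall>c\<in>{1..m}. F (r0, c) = F (r0, c0)" and col: "\<forall>r\<in>{1..m}. F (r, c0) = F (r0, c0)"
    unfolding mixed_rows_def by auto
  show ?thesis
  proof (cases "F (r0, c0)")
    case True
    then have "\<forall>r\<in>{1..m}. \<exists>c\<in>{1..m}. F (r, c)" "\<forall>c\<in>{1..m}. \<exists>r\<in>{1..m}. F (r, c)"
      using row col r0(1) c0(1) by blast+
    then show ?thesis using assms(2) by (rule mixed_rows_or_columns_large_if_lines_meet)
  next
    case False
    then have "\<forall>r\<in>{1..m}. \<exists>c\<in>{1..m}. \<not> F (r, c)" "\<forall>c\<in>{1..m}. \<exists>r\<in>{1..m}. \<not> F (r, c)"
      using row col r0(1) c0(1) by blast+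
    moreover have "m\<^sup>2 \<le> 4 * card {p \<in> comp_grid_V m. \<not> \<not> F p}" using assms(1) by simp
    ultimately have "m \<le> 2 * card (mixed_rows m (\<lambda>p. \<not> F p)) \<or>
        m \<le> 2 * card (mixed_rows m ((\<lambda>p. \<not> F p) \<circ> prod.swap))"
      by (rule mixed_rows_or_columns_large_if_lines_meet)
    then show ?thesis
      using mixed_rows_not[of m F] mixed_rows_not[of m "F \<circ> prod.swap"] by (simp add: comp_def)
  qed
qed

definition comp_grid_iso :: "nat \<Rightarrow> (nat \<times> nat \<Rightarrow> 'a) \<Rightarrow> ('a \<Rightarrow> 'a \<Rightarrow> bool) \<Rightarrow> bool" where
  "comp_grid_iso m h E \<longleftrightarrow> inj_on h (comp_grid_V m) \<and>
     (\<forall>p\<in>comp_grid_V m. \<forall>q\<in>comp_grid_V m. E (h p) (h q) \<longleftrightarrow> comp_grid_E p q)"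

lemma comp_grid_iso_swap:
  assumes "comp_grid_iso m h E"
  shows "comp_grid_iso m (h \<circ> prod.swap) E" "(h \<circ> prod.swap) ` comp_grid_V m = h ` comp_grid_V m"
proof -
  have swap: "prod.swap ` comp_grid_V m = comp_grid_V m" unfolding comp_grid_V_def by auto
  have swap_E: "comp_grid_E (prod.swap p) (prod.swap q) = comp_grid_E p q" for p q
    unfolding comp_grid_E_def by (cases p, cases q) auto
  have "inj_on (h \<circ> prod.swap) (comp_grid_V m)"
    using assms swap unfolding comp_grid_iso_def by (intro comp_inj_on) simp_all
  moreover have "prod.swap p \<in> comp_grid_V m" if "p \<in> comp_grid_V m" for p
    using that swap by blast
  ultimately show "comp_grid_iso m (h \<circ> prod.swap) E"
    using assms unfolding comp_grid_iso_def by (simp add: swap_E)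
  show "(h \<circ> prod.swap) ` comp_grid_V m = h ` comp_grid_V m" by (metis image_comp swap)
qed

lemma comp_grid_E_column_one:
  assumes "2 \<le> c"
  shows "comp_grid_E (s, 1) (t, c) \<longleftrightarrow> s \<le> t" "comp_grid_E (s, c) (t, 1) \<longleftrightarrow> t \<le> s"
  using assms unfolding comp_grid_E_def by simp_all

lemma comp_grid_iso_adj:
  assumes "comp_grid_iso m h E" "p \<in> comp_grid_V m" "q \<in> comp_grid_V m"
  shows "E (h p) (h q) \<longleftrightarrow> comp_grid_E p q"
  using assms unfolding comp_grid_iso_def by blast

lemma comp_grid_iso_inj_row_cells:
  assumes iso: "comp_grid_iso m h E" and K: "K \<subseteq> {1..m}" and c: "\<And>r. r \<in> K \<Longrightarrow> c r \<in> {1..m}"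
  shows "inj_on (\<lambda>r. h (r, c r)) K"
proof (rule inj_onI)
  fix r s assume rs: "r \<in> K" "s \<in> K" "h (r, c r) = h (s, c s)"
  have "(r, c r) \<in> comp_grid_V m" "(s, c s) \<in> comp_grid_V m"
    using rs(1,2) K c unfolding comp_grid_V_def by auto
  with rs(3) iso have "(r, c r) = (s, c s)" unfolding comp_grid_iso_def by (blast dest: inj_onD)
  then show "r = s" by simp
qed

lemma mixed_row_other_cell:
  assumes "r \<in> mixed_rows m F"
  shows "\<exists>c. c \<in> {2..m} \<and> (F (r, c) \<longleftrightarrow> \<not> F (r, 1))"
proof -
  obtain c where "c \<in> {1..m}" "F (r, c) \<longleftrightarrow> \<not> F (r, 1)"
    using assms unfolding mixed_rows_def by blast
  moreover from this have "c \<noteq> 1" by blast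
  ultimately show ?thesis by (intro exI[of _ c]) auto
qed

text \<open>A mixed row \<open>r\<close> pairs the cell \<open>(r, 1)\<close> with a cell \<open>(r, c)\<close>, \<open>c \<ge> 2\<close>, on the other
  side of the cut. For distinct rows \<open>s\<close>, \<open>t\<close> the cells \<open>(s, 1)\<close> and \<open>(t, c)\<close> are adjacent
  only if \<open>s < t\<close>, so these pairs form a triangular submatrix of the cut matrix, once for the
  rows whose first cell lies in \<open>X\<close> and once (transposed) for the others.\<close>

lemma card_mixed_rows_first_in_le_cut_rank:
  assumes iso: "comp_grid_iso m h E" and X: "X \<subseteq> h ` comp_grid_V m"
  shows "card {r \<in> mixed_rows m (\<lambda>p. h p \<in> X). h (r, 1) \<in> X} \<le> cut_rank (h ` comp_grid_V m) E X"
    (is "card ?K \<le> _")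
proof -
  have "finite (h ` comp_grid_V m)" by (simp add: comp_grid_V_def)
  with X have "finite X" by (rule finite_subset)
  have K: "?K \<subseteq> {1..m}" using mixed_rows_subset by blast
  then have "finite ?K" by (simp add: finite_subset)
  have "\<exists>c. c \<in> {2..m} \<and> h (r, c) \<notin> X" if "r \<in> ?K" for r
    using mixed_row_other_cell[of r m "\<lambda>p. h p \<in> X"] that by auto
  then have "\<forall>r\<in>?K. \<exists>c. c \<in> {2..m} \<and> h (r, c) \<notin> X" by blast
  then obtain c where c: "\<forall>r\<in>?K. c r \<in> {2..m} \<and> h (r, c r) \<notin> X" by (rule bchoice[THEN exE])
  have grid: "(r, 1) \<in> comp_grid_V m" "(r, c r) \<in> comp_grid_V m" if "r \<in> ?K" for r
    using that K c unfolding comp_grid_V_def by auto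
  show ?thesis
  proof (rule card_le_cut_rank_if_triangular[where x = "\<lambda>r. h (r, 1)" and y = "\<lambda>r. h (r, c r)" and \<rho> = id])
    show "inj_on (\<lambda>r. h (r, 1)) ?K" using K by (intro comp_grid_iso_inj_row_cells[OF iso]) auto
    show "(\<lambda>r. h (r, 1)) ` ?K \<subseteq> X" by blast
    show "(\<lambda>r. h (r, c r)) ` ?K \<subseteq> h ` comp_grid_V m - X" using grid c by blast
    show "E (h (k, 1)) (h (k, c k))" if "k \<in> ?K" for k
      using comp_grid_iso_adj[OF iso grid[OF that]] comp_grid_E_column_one(1)[of "c k" k k] c that by simp
    show "id s < id t" if "s \<in> ?K" "t \<in> ?K" "s \<noteq> t" "E (h (s, 1)) (h (t, c t))" for s t
      using comp_grid_iso_adj[OF iso grid(1)[OF that(1)] grid(2)[OF that(2)]]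
        comp_grid_E_column_one(1)[of "c t" s t] c that by simp
    show "finite X" "finite ?K" by fact+
  qed
qed

lemma card_mixed_rows_first_out_le_cut_rank:
  assumes iso: "comp_grid_iso m h E" and X: "X \<subseteq> h ` comp_grid_V m"
  shows "card {r \<in> mixed_rows m (\<lambda>p. h p \<in> X). h (r, 1) \<notin> X} \<le> cut_rank (h ` comp_grid_V m) E X"
    (is "card ?K \<le> _")
proof -
  have "finite (h ` comp_grid_V m)" by (simp add: comp_grid_V_def)
  with X have "finite X" by (rule finite_subset)
  have K: "?K \<subseteq> {1..m}" using mixed_rows_subset by blast
  then have "finite ?K" by (simp add: finite_subset)
  have "\<exists>c. c \<in> {2..m} \<and> h (r, c) \<in> X" if "r \<in> ?K" for r
    using mixed_row_other_cell[of r m "\<lambda>p. h p \<in> X"] that by auto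
  then have "\<forall>r\<in>?K. \<exists>c. c \<in> {2..m} \<and> h (r, c) \<in> X" by blast
  then obtain c where c: "\<forall>r\<in>?K. c r \<in> {2..m} \<and> h (r, c r) \<in> X" by (rule bchoice[THEN exE])
  have grid: "(r, 1) \<in> comp_grid_V m" "(r, c r) \<in> comp_grid_V m" if "r \<in> ?K" for r
    using that K c unfolding comp_grid_V_def by auto
  show ?thesis
  proof (rule card_le_cut_rank_if_triangular[where x = "\<lambda>r. h (r, c r)" and y = "\<lambda>r. h (r, 1)"
        and \<rho> = "\<lambda>r. - int r"])
    show "inj_on (\<lambda>r. h (r, c r)) ?K" using K c by (intro comp_grid_iso_inj_row_cells[OF iso]) auto
    show "(\<lambda>r. h (r, c r)) ` ?K \<subseteq> X" using c by blast
    show "(\<lambda>r. h (r, 1)) ` ?K \<subseteq> h ` comp_grid_V m - X" using grid by blast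
    show "E (h (k, c k)) (h (k, 1))" if "k \<in> ?K" for k
      using comp_grid_iso_adj[OF iso grid(2)[OF that] grid(1)[OF that]] comp_grid_E_column_one(2)[of "c k" k k]
        c that by simp
    show "- int s < - int t" if "s \<in> ?K" "t \<in> ?K" "s \<noteq> t" "E (h (s, c s)) (h (t, 1))" for s t
      using comp_grid_iso_adj[OF iso grid(2)[OF that(1)] grid(1)[OF that(2)]]
        comp_grid_E_column_one(2)[of "c s" s t] c that by simp
    show "finite X" "finite ?K" by fact+
  qed
qed

lemma card_mixed_rows_le_cut_rank:
  assumes iso: "comp_grid_iso m h E" and X: "X \<subseteq> h ` comp_grid_V m"
  shows "card (mixed_rows m (\<lambda>p. h p \<in> X)) \<le> 2 * cut_rank (h ` comp_grid_V m) E X"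
proof -
  let ?M = "mixed_rows m (\<lambda>p. h p \<in> X)"
  have "finite ?M" using mixed_rows_subset finite_atLeastAtMost by (rule finite_subset)
  then have "finite ({r \<in> ?M. h (r, 1) \<in> X} \<union> {r \<in> ?M. h (r, 1) \<notin> X})"
    by (rule finite_subset[rotated]) blast
  then have "card ?M \<le> card ({r \<in> ?M. h (r, 1) \<in> X} \<union> {r \<in> ?M. h (r, 1) \<notin> X})"
    by (rule card_mono) blast
  also have "\<dots> \<le> card {r \<in> ?M. h (r, 1) \<in> X} + card {r \<in> ?M. h (r, 1) \<notin> X}"
    by (rule card_Un_le)
  finally have "card ?M \<le> card {r \<in> ?M. h (r, 1) \<in> X} + card {r \<in> ?M. h (r, 1) \<notin> X}" .
  with card_mixed_rows_first_in_le_cut_rank[OF iso X] card_mixed_rows_first_out_le_cut_rank[OF iso X]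
  show ?thesis by linarith
qed

lemma comp_grid_balanced_cut_rank:
  assumes iso: "comp_grid_iso m h E" and X: "X \<subseteq> h ` comp_grid_V m"
    and large: "m\<^sup>2 \<le> 4 * card X" "m\<^sup>2 \<le> 4 * card (h ` comp_grid_V m - X)"
  shows "m \<le> 4 * cut_rank (h ` comp_grid_V m) E X"
proof -
  let ?G = "comp_grid_V m"
  define F where "F p \<longleftrightarrow> h p \<in> X" for p
  have inj: "inj_on h ?G" using iso unfolding comp_grid_iso_def by blast
  have "X = h ` {p \<in> ?G. F p}" "h ` ?G - X = h ` {p \<in> ?G. \<not> F p}"
    using X unfolding F_def by auto
  then have "card X = card {p \<in> ?G. F p}" "card (h ` ?G - X) = card {p \<in> ?G. \<not> F p}"
    by (simp_all add: card_image inj_on_subset[OF inj])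
  then have "m \<le> 2 * card (mixed_rows m F) \<or> m \<le> 2 * card (mixed_rows m (F \<circ> prod.swap))"
    using large by (intro mixed_rows_or_columns_large) simp_all
  moreover have "card (mixed_rows m F) \<le> 2 * cut_rank (h ` ?G) E X"
    using card_mixed_rows_le_cut_rank[OF iso X] unfolding F_def .
  moreover have "card (mixed_rows m (F \<circ> prod.swap)) \<le> 2 * cut_rank (h ` ?G) E X"
    using card_mixed_rows_le_cut_rank[OF comp_grid_iso_swap(1)[OF iso]] X
    unfolding F_def comp_grid_iso_swap(2)[OF iso] by (simp add: comp_def)
  ultimately show ?thesis by linarith
qed

section \<open>Balanced edges of rank-decompositions\<close>

lemma finite_tree_edges: "finite N \<Longrightarrow> finite (tree_edges N T)"
proof -
  assume "finite N"
  have "tree_edges N T \<subseteq> (\<lambda>(s, t). {s, t}) ` (N \<times> N)" unfolding tree_edges_def by auto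
  moreover have "finite ((\<lambda>(s, t). {s, t}) ` (N \<times> N))" using \<open>finite N\<close> by simp
  ultimately show ?thesis by (rule finite_subset)
qed

text \<open>Every node other than the root \<open>r\<close> has an edge to a node strictly closer to \<open>r\<close>; these
  edges are pairwise distinct.\<close>

lemma card_tree_edges_ge_if_connected:
  fixes R :: "nat \<Rightarrow> nat \<Rightarrow> bool"
  assumes "finite N" "r \<in> N" and closed: "\<And>x y. R x y \<Longrightarrow> y \<in> N"
    and connected: "\<And>x. x \<in> N \<Longrightarrow> R\<^sup>*\<^sup>* x r"
  shows "card N - 1 \<le> card (tree_edges N R)"
proof -
  define dist where "dist x = (LEAST k. (R ^^ k) x r)" for x
  have closer: "\<forall>x \<in> N - {r}. \<exists>p. R x p \<and> dist p < dist x"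
  proof
    fix x assume x: "x \<in> N - {r}"
    then have "\<exists>k. (R ^^ k) x r" using connected by (simp add: rtranclp_power)
    then have path: "(R ^^ dist x) x r" unfolding dist_def by (rule LeastI_ex)
    with x obtain k where k: "dist x = Suc k" by (cases "dist x") auto
    with path obtain p where p: "R x p" "(R ^^ k) p r" by (metis relpowp_Suc_D2)
    have "dist p \<le> k" unfolding dist_def using p(2) by (rule Least_le)
    with p k show "\<exists>p. R x p \<and> dist p < dist x" by auto
  qed
  obtain parent where parent: "\<forall>x \<in> N - {r}. R x (parent x) \<and> dist (parent x) < dist x"
    using bchoice[OF closer] by blast
  have "inj_on (\<lambda>x. {x, parent x}) (N - {r})"
  proof (rule inj_onI)
    fix x y assume xy: "x \<in> N - {r}" "y \<in> N - {r}" "{x, parent x} = {y, parent y}"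
    show "x = y"
    proof (rule ccontr)
      assume "x \<noteq> y"
      with xy(3) have "x = parent y" "y = parent x" by (auto simp: doubleton_eq_iff)
      moreover have "dist (parent x) < dist x" "dist (parent y) < dist y" using parent xy(1,2) by auto
      ultimately show False by simp
    qed
  qed
  moreover have "(\<lambda>x. {x, parent x}) ` (N - {r}) \<subseteq> tree_edges N R"
    unfolding tree_edges_def using parent closed by blast
  ultimately have "card (N - {r}) \<le> card (tree_edges N R)"
    using finite_tree_edges[OF \<open>finite N\<close>] by (rule card_inj_on_le)
  with assms(1,2) show ?thesis by simp
qed

definition remove_edge :: "(nat \<Rightarrow> nat \<Rightarrow> bool) \<Rightarrow> nat \<Rightarrow> nat \<Rightarrow> nat \<Rightarrow> nat \<Rightarrow> bool" where
  "remove_edge T s t x y \<longleftrightarrow> T x y \<and> {x, y} \<noteq> {s, t}"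

lemma remove_edge_commute: "remove_edge T s t = remove_edge T t s"
  unfolding remove_edge_def by (auto simp: insert_commute)

lemma edge_side_eq: "edge_side V T L s t = {v \<in> V. (remove_edge T s t)\<^sup>*\<^sup>* s (L v)}"
  unfolding edge_side_def remove_edge_def by simp

locale tree =
  fixes N :: "nat set" and T :: "nat \<Rightarrow> nat \<Rightarrow> bool"
  assumes is_tree: "is_tree N T"
begin

lemma finite: "finite N"
  and sym: "T x y \<Longrightarrow> T y x"
  and irrefl: "\<not> T x x"
  and nodes: "T x y \<Longrightarrow> x \<in> N \<and> y \<in> N"
  and connected: "x \<in> N \<Longrightarrow> y \<in> N \<Longrightarrow> T\<^sup>*\<^sup>* x y"
  and card_edges: "card (tree_edges N T) = card N - 1"
  using is_tree unfolding is_tree_def by blast+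

lemma remove_edge_rtranclp_sym:
  assumes "(remove_edge T s t)\<^sup>*\<^sup>* x y"
  shows "(remove_edge T s t)\<^sup>*\<^sup>* y x"
proof -
  have "symp (remove_edge T s t)"
    by (rule sympI) (auto simp: remove_edge_def insert_commute intro: sym)
  with assms show ?thesis by (metis symp_rtranclp sympD)
qed

text \<open>Each node is reachable from \<open>s\<close> or \<open>t\<close> after deleting the edge \<open>st\<close>: follow a path from
  \<open>s\<close> and restart at the endpoint whenever it uses \<open>st\<close>.\<close>

lemma remove_edge_reaches:
  assumes "T s t" "x \<in> N"
  shows "(remove_edge T s t)\<^sup>*\<^sup>* s x \<or> (remove_edge T s t)\<^sup>*\<^sup>* t x"
proof -
  have "T\<^sup>*\<^sup>* s x" using connected assms nodes by blast
  then show ?thesis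
  proof (induction rule: rtranclp_induct)
    case (step y z)
    show ?case
    proof (cases "{y, z} = {s, t}")
      case True
      then show ?thesis by (auto simp: doubleton_eq_iff)
    next
      case False
      with step(2) have "remove_edge T s t y z" unfolding remove_edge_def by simp
      with step(3) show ?thesis by (meson rtranclp.rtrancl_into_rtrancl)
    qed
  qed simp
qed

text \<open>If \<open>s\<close> still reached \<open>t\<close> after deleting the edge \<open>st\<close>, the remaining graph would be
  connected with one edge fewer than a tree needs.\<close>

lemma remove_edge_disconnects:
  assumes st: "T s t"
  shows "\<not> (remove_edge T s t)\<^sup>*\<^sup>* s t"
proof
  assume reach: "(remove_edge T s t)\<^sup>*\<^sup>* s t"
  let ?R = "remove_edge T s t"
  have sN: "s \<in> N" "t \<in> N" using nodes[OF st] by auto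
  have "card N - 1 \<le> card (tree_edges N ?R)"
  proof (rule card_tree_edges_ge_if_connected[OF finite sN(1)])
    show "?R x y \<Longrightarrow> y \<in> N" for x y using nodes unfolding remove_edge_def by blast
    show "?R\<^sup>*\<^sup>* x s" if "x \<in> N" for x
      using remove_edge_reaches[OF st that] reach remove_edge_rtranclp_sym rtranclp_trans by metis
  qed
  moreover have "tree_edges N ?R = tree_edges N T - {{s, t}}"
    unfolding tree_edges_def remove_edge_def by auto
  moreover have "{s, t} \<in> tree_edges N T" unfolding tree_edges_def using sN st by blast
  moreover have "card N \<ge> 2"
  proof -
    have "card {s, t} \<le> card N" using sN finite by (intro card_mono) auto
    moreover have "s \<noteq> t" using st irrefl by blast
    ultimately show ?thesis by simp
  qed
  ultimately show False
    using card_edges finite_tree_edges[OF finite, of T] by (simp add: card_Diff_singleton)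
qed

lemma remove_edge_not_reaches_both:
  assumes "T s t" "(remove_edge T s t)\<^sup>*\<^sup>* s x" "(remove_edge T s t)\<^sup>*\<^sup>* t x"
  shows False
  using remove_edge_disconnects[OF assms(1)] assms(2) remove_edge_rtranclp_sym[OF assms(3)]
  by (meson rtranclp_trans)

text \<open>A path from \<open>s\<close> that avoids the edge \<open>st\<close> never visits \<open>t\<close>, so it avoids every edge at \<open>t\<close>.\<close>

lemma remove_edge_reaches_next:
  assumes st: "T s t" and "T t u" "u \<noteq> s" and x: "(remove_edge T s t)\<^sup>*\<^sup>* s x"
  shows "(remove_edge T t u)\<^sup>*\<^sup>* t x"
proof -
  have "(remove_edge T t u)\<^sup>*\<^sup>* s x" using x
  proof (induction rule: rtranclp_induct)
    case (step y z)
    have "(remove_edge T s t)\<^sup>*\<^sup>* s z" using step(1,2) by (rule rtranclp.rtrancl_into_rtrancl)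
    with step(1) have "y \<noteq> t" "z \<noteq> t" using remove_edge_disconnects[OF st] by auto
    with step(2) have "remove_edge T t u y z" unfolding remove_edge_def by (auto simp: doubleton_eq_iff)
    with step(3) show ?case by (rule rtranclp.rtrancl_into_rtrancl)
  qed simp
  moreover have "remove_edge T t u t s"
    using sym[OF st] \<open>u \<noteq> s\<close> unfolding remove_edge_def by (auto simp: doubleton_eq_iff)
  ultimately show ?thesis by (metis converse_rtranclp_into_rtranclp)
qed

lemma remove_edge_reaches_via_neighbour:
  assumes st: "T s t" and x: "(remove_edge T s t)\<^sup>*\<^sup>* t x"
  shows "x = t \<or> (\<exists>u. T t u \<and> u \<noteq> s \<and> (remove_edge T u t)\<^sup>*\<^sup>* u x)"
  using x
proof (induction rule: rtranclp_induct)
  case (step y z)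
  from step(2) have Tyz: "T y z" and not_st: "{y, z} \<noteq> {s, t}" unfolding remove_edge_def by auto
  from step(3) show ?case
  proof
    assume "y = t"
    with Tyz not_st show ?case by (auto simp: insert_commute)
  next
    assume "\<exists>u. T t u \<and> u \<noteq> s \<and> (remove_edge T u t)\<^sup>*\<^sup>* u y"
    then obtain u where u: "T t u" "u \<noteq> s" "(remove_edge T u t)\<^sup>*\<^sup>* u y" by blast
    show ?case
    proof (cases "{y, z} = {u, t}")
      case True
      with u show ?thesis by (auto simp: doubleton_eq_iff)
    next
      case False
      with Tyz have "remove_edge T u t y z" unfolding remove_edge_def by simp
      with u show ?thesis by (meson rtranclp.rtrancl_into_rtrancl)
    qed
  qed
qed simp

end

lemma rank_decomposition_tree: "rank_decomposition V N T L \<Longrightarrow> tree N T"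
  unfolding rank_decomposition_def tree_def by blast

lemma rank_decomposition_leaf:
  assumes "rank_decomposition V N T L" "v \<in> V"
  shows "L v \<in> N" "tree_degree N T (L v) = 1"
  using assms unfolding rank_decomposition_def bij_betw_def tree_leaves_def by auto

lemma edge_side_subset: "edge_side V T L s t \<subseteq> V"
  unfolding edge_side_def by blast

lemma edge_side_swap:
  assumes rd: "rank_decomposition V N T L" and st: "T s t"
  shows "edge_side V T L t s = V - edge_side V T L s t"
proof -
  interpret tree N T using rank_decomposition_tree[OF rd] .
  show ?thesis
    unfolding edge_side_eq remove_edge_commute[of T t s]
    using remove_edge_reaches[OF st] remove_edge_not_reaches_both[OF st] rank_decomposition_leaf(1)[OF rd]
    by blast
qed

lemma edge_side_subset_neighbour_sides:
  assumes rd: "rank_decomposition V N T L" and st: "T s t"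
  shows "edge_side V T L t s \<subseteq> {v \<in> V. L v = t} \<union> (\<Union>u \<in> {u \<in> N. T t u} - {s}. edge_side V T L u t)"
proof -
  interpret tree N T using rank_decomposition_tree[OF rd] .
  show ?thesis
    unfolding edge_side_eq remove_edge_commute[of T t s]
    using remove_edge_reaches_via_neighbour[OF st] nodes by blast
qed

lemma card_edge_side_swap:
  assumes "rank_decomposition V N T L" "T s t" "finite V"
  shows "card (edge_side V T L t s) = card V - card (edge_side V T L s t)"
proof -
  have "finite (edge_side V T L s t)" using edge_side_subset assms(3) by (rule finite_subset)
  then show ?thesis unfolding edge_side_swap[OF assms(1,2)] by (simp add: card_Diff_subset edge_side_subset)
qed

lemma card_edge_side_le_neighbour_sides:
  assumes rd: "rank_decomposition V N T L" and st: "T s t" and "finite V"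
  shows "card (edge_side V T L t s) \<le>
    card {v \<in> V. L v = t} + (\<Sum>u \<in> {u \<in> N. T t u} - {s}. card (edge_side V T L u t))"
proof -
  interpret tree N T using rank_decomposition_tree[OF rd] .
  let ?U = "\<Union>u \<in> {u \<in> N. T t u} - {s}. edge_side V T L u t"
  have "?U \<subseteq> V" by (rule UN_least) (rule edge_side_subset)
  then have "{v \<in> V. L v = t} \<union> ?U \<subseteq> V" by blast
  with \<open>finite V\<close> have "finite ({v \<in> V. L v = t} \<union> ?U)" by (rule finite_subset[rotated])
  moreover have "edge_side V T L t s \<subseteq> {v \<in> V. L v = t} \<union> ?U"
    by (rule edge_side_subset_neighbour_sides[OF rd st])
  ultimately have "card (edge_side V T L t s) \<le> card ({v \<in> V. L v = t} \<union> ?U)"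
    by (rule card_mono)
  also have "\<dots> \<le> card {v \<in> V. L v = t} + card ?U"
    by (rule card_Un_le)
  also have "card ?U \<le> (\<Sum>u \<in> {u \<in> N. T t u} - {s}. card (edge_side V T L u t))"
    by (rule card_UN_le) (simp add: finite)
  finally show ?thesis by simp
qed

lemma rank_decomposition_has_edge:
  assumes rd: "rank_decomposition V N T L" and "2 \<le> card V"
  obtains s t where "T s t"
proof -
  interpret tree N T using rank_decomposition_tree[OF rd] .
  have "card (tree_leaves N T) = card V"
    using rd unfolding rank_decomposition_def by (metis bij_betw_same_card)
  moreover have "finite (tree_leaves N T)" using finite unfolding tree_leaves_def by simp
  ultimately obtain a b where ab: "a \<in> tree_leaves N T" "b \<in> tree_leaves N T" "a \<noteq> b"
    using assms(2) card_le_Suc0_iff_eq[of "tree_leaves N T"] by auto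
  then have "T\<^sup>*\<^sup>* a b" using connected unfolding tree_leaves_def by blast
  with ab(3) show ?thesis using that by (metis converse_rtranclpE)
qed

text \<open>If all edges at \<open>t\<close> other than \<open>st\<close> have small far sides, then the side of \<open>t\<close> is covered
  by at most two sets of fewer than \<open>|V|/3\<close> vertices (or by a single leaf), so the side of \<open>s\<close> is large.\<close>

lemma card_edge_side_ge_if_neighbour_sides_small:
  assumes rd: "rank_decomposition V N T L" and n2: "2 \<le> card V" and st: "T s t"
    and small: "\<And>u. u \<in> {u \<in> N. T t u} - {s} \<Longrightarrow> 3 * card (edge_side V T L u t) < card V"
  shows "card V \<le> 3 * card (edge_side V T L s t)"
proof (rule ccontr)
  assume "\<not> card V \<le> 3 * card (edge_side V T L s t)"
  then have small_st: "3 * card (edge_side V T L s t) < card V" by simp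
  interpret tree N T using rank_decomposition_tree[OF rd] .
  have "finite V" using n2 by (metis card.infinite not_numeral_le_zero)
  let ?S = "{u \<in> N. T t u} - {s}"
  have cover: "card V - card (edge_side V T L s t) \<le>
      card {v \<in> V. L v = t} + (\<Sum>u \<in> ?S. card (edge_side V T L u t))"
    using card_edge_side_le_neighbour_sides[OF rd st \<open>finite V\<close>] card_edge_side_swap[OF rd st \<open>finite V\<close>]
    by simp
  have s_neighbour: "s \<in> {u \<in> N. T t u}" using sym[OF st] nodes[OF st] by simp
  have "tree_degree N T t \<in> {1, 3}" using rd nodes[OF st] unfolding rank_decomposition_def by blast
  then consider "tree_degree N T t = 1" | "tree_degree N T t = 3" by blast
  then show False
  proof cases
    case 1
    then have "?S = {}"
      using s_neighbour unfolding tree_degree_def by (metis card_1_singletonE Diff_cancel singletonD)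
    moreover have "card {v \<in> V. L v = t} \<le> 1"
      using rd unfolding rank_decomposition_def bij_betw_def
      by (auto simp: card_le_Suc0_iff_eq \<open>finite V\<close> dest: inj_onD)
    ultimately show False using cover small_st n2 by (simp only: sum.empty)
  next
    case 2
    then have two: "card ?S = 2" using s_neighbour finite unfolding tree_degree_def by simp
    have "{v \<in> V. L v = t} = {}" using rank_decomposition_leaf(2)[OF rd] 2 by force
    then have "card {v \<in> V. L v = t} = 0" by (simp only: card.empty)
    moreover have "3 * (\<Sum>u \<in> ?S. card (edge_side V T L u t)) < 2 * card V"
    proof -
      have "3 * (\<Sum>u \<in> ?S. card (edge_side V T L u t)) = (\<Sum>u \<in> ?S. 3 * card (edge_side V T L u t))"
        by (simp add: sum_distrib_left)
      also have "\<dots> < (\<Sum>u \<in> ?S. card V)"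
      proof (rule sum_strict_mono)
        show "finite ?S" using finite by simp
        show "?S \<noteq> {}" using two by force
      qed (rule small)
      finally show ?thesis using two by simp
    qed
    ultimately show False using cover small_st by linarith
  qed
qed

text \<open>Orient every unbalanced edge \<open>st\<close> so that the side of \<open>s\<close> has fewer than \<open>|V|/3\<close>
  vertices and pick such an edge whose \<open>s\<close>-component of the tree is largest. Then all other
  edges at \<open>t\<close> must point towards \<open>t\<close>.\<close>

lemma rank_decomposition_balanced_edge:
  assumes rd: "rank_decomposition V N T L" and n2: "2 \<le> card V"
  obtains s t where "T s t" "card V \<le> 3 * card (edge_side V T L s t)"
    "card V \<le> 3 * card (V - edge_side V T L s t)"
proof (rule ccontr)
  note balanced_thesis = that
  assume no_balanced: "\<not> thesis"
  interpret tree N T using rank_decomposition_tree[OF rd] .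
  define A where "A s t = edge_side V T L s t" for s t
  define C where "C s t = {x \<in> N. (remove_edge T s t)\<^sup>*\<^sup>* s x}" for s t
  have unbalanced: "3 * card (A s t) < card V \<or> 3 * card (A t s) < card V" if st: "T s t" for s t
    using no_balanced balanced_thesis[OF st] unfolding A_def edge_side_swap[OF rd st] by (meson not_le)
  define D where "D = {(s, t). T s t \<and> 3 * card (A s t) < card V}"
  have "D \<subseteq> N \<times> N" unfolding D_def using nodes by auto
  then have "finite D" using finite by (simp add: finite_subset)
  obtain a b where "T a b" using rank_decomposition_has_edge[OF rd n2] .
  then have "D \<noteq> {}" using unbalanced[of a b] sym unfolding D_def by blast
  define f where "f = (\<lambda>(s, t). card (C s t))"
  have "Max (f ` D) \<in> f ` D" using \<open>finite D\<close> \<open>D \<noteq> {}\<close> by simp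
  then obtain s t where "(s, t) \<in> D" and max: "f (s, t) = Max (f ` D)" by auto
  then have st: "T s t" "3 * card (A s t) < card V" unfolding D_def by auto
  have maximal: "card (C s' t') \<le> card (C s t)" if "(s', t') \<in> D" for s' t'
  proof -
    have "f (s', t') \<le> Max (f ` D)" using \<open>finite D\<close> that by simp
    with max show ?thesis by (simp add: f_def)
  qed
  have "3 * card (A u t) < card V" if "u \<in> {u \<in> N. T t u} - {s}" for u
  proof -
    from that have tu: "T t u" "u \<noteq> s" by auto
    have "C s t \<subseteq> C t u" unfolding C_def using remove_edge_reaches_next[OF st(1) tu] by auto
    moreover have "t \<in> C t u" "t \<notin> C s t"
      unfolding C_def using nodes[OF st(1)] remove_edge_disconnects[OF st(1)] by auto
    ultimately have "C s t \<subset> C t u" by blast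
    moreover have "finite (C t u)" unfolding C_def using finite by simp
    ultimately have "card (C s t) < card (C t u)" by (simp add: psubset_card_mono)
    then have "(t, u) \<notin> D" using maximal by fastforce
    then show ?thesis using unbalanced[OF tu(1)] tu(1) unfolding D_def by auto
  qed
  then have "card V \<le> 3 * card (A s t)"
    unfolding A_def by (rule card_edge_side_ge_if_neighbour_sides_small[OF rd n2 st(1)])
  with st(2) show False by simp
qed

definition add_leaf :: "(nat \<Rightarrow> nat \<Rightarrow> bool) \<Rightarrow> nat \<Rightarrow> nat \<Rightarrow> nat \<Rightarrow> nat \<Rightarrow> bool" where
  "add_leaf T l p x y \<longleftrightarrow> T x y \<or> (x = l \<and> y = p) \<or> (x = p \<and> y = l)"

context tree
begin

lemma is_tree_add_leaf:
  assumes l: "l \<in> N" and p: "p \<notin> N"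
  shows "is_tree (insert p N) (add_leaf T l p)"
proof -
  let ?T = "add_leaf T l p"
  have "T\<^sup>*\<^sup>* x y \<Longrightarrow> ?T\<^sup>*\<^sup>* x y" for x y
    by (rule rtranclp_mono[THEN predicate2D, of T]) (auto simp: add_leaf_def)
  moreover have "?T p l" "?T l p" by (simp_all add: add_leaf_def)
  ultimately have to_l: "?T\<^sup>*\<^sup>* x l \<and> ?T\<^sup>*\<^sup>* l x" if "x \<in> insert p N" for x
    using that connected[OF _ l] connected[OF l] by auto
  have "tree_edges (insert p N) ?T = insert {l, p} (tree_edges N T)"
    unfolding tree_edges_def add_leaf_def using l nodes by blast
  moreover have "{l, p} \<notin> tree_edges N T"
    unfolding tree_edges_def using p nodes by (auto simp: doubleton_eq_iff)
  ultimately have "card (tree_edges (insert p N) ?T) = card (insert p N) - 1"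
    using card_edges finite_tree_edges[OF finite, of T] p card_gt_0_iff[of N] finite l by auto
  moreover have "?T\<^sup>*\<^sup>* x y" if "x \<in> insert p N" "y \<in> insert p N" for x y
    using to_l[OF that(1)] to_l[OF that(2)] by (meson rtranclp_trans)
  moreover have "p \<noteq> l" using l p by blast
  ultimately show ?thesis
    unfolding is_tree_def add_leaf_def using finite sym irrefl nodes l by auto
qed

lemma tree_degree_add_leaf:
  assumes l: "l \<in> N" and p: "p \<notin> N" and x: "x \<in> insert p N"
  shows "tree_degree (insert p N) (add_leaf T l p) x =
    (if x = p then 1 else if x = l then Suc (tree_degree N T x) else tree_degree N T x)"
proof -
  have "p \<noteq> l" using l p by blast
  have "{y \<in> insert p N. add_leaf T l p x y} =
      (if x = p then {l} else if x = l then insert p {y \<in> N. T x y} else {y \<in> N. T x y})"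
    using l p x nodes irrefl unfolding add_leaf_def by auto
  then show ?thesis unfolding tree_degree_def using p finite \<open>p \<noteq> l\<close> by simp
qed

lemma add_two_leaves:
  assumes l: "l \<in> N" and p: "p \<notin> N" and q: "q \<notin> N" "q \<noteq> p"
  shows "is_tree (insert q (insert p N)) (add_leaf (add_leaf T l p) l q)"
    and "x \<in> insert q (insert p N) \<Longrightarrow> tree_degree (insert q (insert p N)) (add_leaf (add_leaf T l p) l q) x =
      (if x = p \<or> x = q then 1 else if x = l then Suc (Suc (tree_degree N T x)) else tree_degree N T x)"
proof -
  interpret t1: tree "insert p N" "add_leaf T l p" by (rule tree.intro, rule is_tree_add_leaf[OF l p])
  have l1: "l \<in> insert p N" and q1: "q \<notin> insert p N" using l q by auto
  show "is_tree (insert q (insert p N)) (add_leaf (add_leaf T l p) l q)"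
    by (rule t1.is_tree_add_leaf[OF l1 q1])
  assume x: "x \<in> insert q (insert p N)"
  have "p \<noteq> l" "q \<noteq> l" using l p q by auto
  consider "x = q" | "x = p" | "x \<in> N" using x by blast
  then show "tree_degree (insert q (insert p N)) (add_leaf (add_leaf T l p) l q) x =
      (if x = p \<or> x = q then 1 else if x = l then Suc (Suc (tree_degree N T x)) else tree_degree N T x)"
  proof cases
    case 1
    then show ?thesis using t1.tree_degree_add_leaf[OF l1 q1, of x] by simp
  next
    case 2
    then show ?thesis
      using t1.tree_degree_add_leaf[OF l1 q1, of x] tree_degree_add_leaf[OF l p, of x] \<open>q \<noteq> p\<close> \<open>p \<noteq> l\<close> by simp
  next
    case 3
    with p q have "x \<noteq> p" "x \<noteq> q" by auto
    then show ?thesis using 3 t1.tree_degree_add_leaf[OF l1 q1, of x] tree_degree_add_leaf[OF l p, of x]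
      by (cases "x = l") simp_all
  qed
qed

end

lemma is_tree_singleton: "is_tree {0} (\<lambda>_ _. False)"
  unfolding is_tree_def tree_edges_def by simp

lemma rank_decomposition_pair:
  assumes "a \<noteq> b"
  shows "rank_decomposition {a, b} {1, 0} (add_leaf (\<lambda>_ _. False) 0 1) (\<lambda>x. if x = a then 0 else 1)"
proof -
  interpret tree "{0}" "\<lambda>_ _. False" by (rule tree.intro, rule is_tree_singleton)
  have degree: "tree_degree {1, 0} (add_leaf (\<lambda>_ _. False) 0 1) x = 1" if "x \<in> {1, 0}" for x :: nat
    using tree_degree_add_leaf[of 0 1 x] that by (auto simp: tree_degree_def)
  then have "tree_leaves {1, 0} (add_leaf (\<lambda>_ _. False) 0 1) = {1, 0}"
    unfolding tree_leaves_def by auto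
  with assms is_tree_add_leaf[of 0 1] degree show ?thesis
    unfolding rank_decomposition_def bij_betw_def inj_on_def by auto
qed

lemma bij_betw_replace_and_insert:
  assumes bij: "bij_betw L V B" and a: "a \<in> V" and v: "v \<notin> V"
    and fresh: "p \<notin> B" "q \<notin> B" "p \<noteq> q"
  shows "bij_betw (L(a := p, v := q)) (insert v V) (insert p (insert q (B - {L a})))"
proof -
  let ?L = "L(a := p, v := q)"
  have "bij_betw L (V - {a}) (B - {L a})"
  proof (rule bij_betw_DiffI[OF bij])
    show "bij_betw L {a} {L a}" by (rule bij_betw_singletonI) simp
    show "{a} \<subseteq> V" "{L a} \<subseteq> B" using a bij_betw_apply[OF bij a] by auto
  qed
  moreover have "bij_betw ?L (V - {a}) (B - {L a}) \<longleftrightarrow> bij_betw L (V - {a}) (B - {L a})"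
    by (rule bij_betw_cong) (use v in auto)
  ultimately have "bij_betw ?L (V - {a}) (B - {L a})" by simp
  moreover have "bij_betw ?L {a, v} {p, q}" using a v fresh unfolding bij_betw_def by auto
  moreover have "(B - {L a}) \<inter> {p, q} = {}" using fresh by auto
  ultimately have "bij_betw ?L ((V - {a}) \<union> {a, v}) ((B - {L a}) \<union> {p, q})"
    by (rule bij_betw_combine)
  moreover have "(V - {a}) \<union> {a, v} = insert v V" using a by auto
  ultimately show ?thesis by (simp add: insert_commute)
qed

text \<open>The leaf of \<open>a\<close> becomes an inner node of degree 3 carrying two new leaves, for \<open>a\<close> and \<open>v\<close>.\<close>

lemma rank_decomposition_insert:
  assumes rd: "rank_decomposition V N T L" and a: "a \<in> V" and v: "v \<notin> V"
  shows "\<exists>N T L. rank_decomposition (insert v V) N T L"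
proof -
  interpret tree N T using rank_decomposition_tree[OF rd] .
  define l p q where "l = L a" and "p = Suc (Max N)" and "q = Suc (Suc (Max N))"
  let ?N = "insert q (insert p N)" and ?T = "add_leaf (add_leaf T l p) l q"
  have l: "l \<in> N" "tree_degree N T l = 1" unfolding l_def using rank_decomposition_leaf[OF rd a] by auto
  have "x < p" "x < q" if "x \<in> N" for x
    unfolding p_def q_def using Max_ge[OF finite that] by simp_all
  then have fresh: "p \<notin> N" "q \<notin> N" "q \<noteq> p" "p \<noteq> l" "q \<noteq> l"
    using l(1) by (auto simp: p_def q_def)
  note degree = add_two_leaves(2)[OF l(1) fresh(1-3)]
  have leaves: "tree_leaves ?N ?T = insert p (insert q (tree_leaves N T - {l}))"
  proof (rule set_eqI)
    fix x
    have "x = p \<or> x = q \<or> x = l \<or> (x \<in> N \<and> x \<noteq> l) \<or> x \<notin> ?N" using l by blast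
    then show "x \<in> tree_leaves ?N ?T \<longleftrightarrow> x \<in> insert p (insert q (tree_leaves N T - {l}))"
      using degree[of x] fresh l unfolding tree_leaves_def by auto
  qed
  have "\<forall>x\<in>?N. tree_degree ?N ?T x \<in> {1, 3}"
  proof
    fix x assume x: "x \<in> ?N"
    then have "x = p \<or> x = q \<or> x = l \<or> (x \<in> N \<and> x \<noteq> l)" by blast
    then show "tree_degree ?N ?T x \<in> {1, 3}"
      using degree[OF x] l rd unfolding rank_decomposition_def by auto
  qed
  moreover have "bij_betw (L(a := p, v := q)) (insert v V) (tree_leaves ?N ?T)"
  proof -
    have "bij_betw L V (tree_leaves N T)" using rd unfolding rank_decomposition_def by blast
    moreover have "p \<notin> tree_leaves N T" "q \<notin> tree_leaves N T" using fresh unfolding tree_leaves_def by auto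
    ultimately have "bij_betw (L(a := p, v := q)) (insert v V) (insert p (insert q (tree_leaves N T - {L a})))"
      using a v fresh(3) by (intro bij_betw_replace_and_insert) auto
    then show ?thesis unfolding leaves by (simp add: l_def)
  qed
  ultimately show ?thesis using add_two_leaves(1)[OF l(1) fresh(1-3)] unfolding rank_decomposition_def by blast
qed

lemma rank_decomposition_exists:
  assumes "finite V" "2 \<le> card V"
  shows "\<exists>N T L. rank_decomposition V N T L"
  using assms
proof (induction V rule: finite_induct)
  case (insert v V)
  show ?case
  proof (cases "2 \<le> card V")
    case True
    with insert.IH obtain N T L where rd: "rank_decomposition V N T L" by blast
    from True have "V \<noteq> {}" by auto
    then obtain a where "a \<in> V" by blast
    from rd this insert.hyps(2) show ?thesis by (rule rank_decomposition_insert)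
  next
    case False
    with insert.hyps insert.prems have "card V = 1" by simp
    then obtain a where V: "V = {a}" by (auto simp: card_1_singleton_iff)
    with insert.hyps(2) have "v \<noteq> a" by blast
    then have "rank_decomposition {v, a} {1, 0} (add_leaf (\<lambda>_ _. False) 0 1) (\<lambda>x. if x = v then 0 else 1)"
      by (rule rank_decomposition_pair)
    with V show ?thesis by blast
  qed
qed simp

lemma cut_rank_le_decomposition_width:
  assumes rd: "rank_decomposition V N T L" and st: "T s t"
  shows "cut_rank V E (edge_side V T L s t) \<le> decomposition_width V E N T L"
proof -
  interpret tree N T using rank_decomposition_tree[OF rd] .
  let ?W = "{cut_rank V E (edge_side V T L s t) | s t. s \<in> N \<and> t \<in> N \<and> T s t}"
  have "?W \<subseteq> (\<lambda>(s, t). cut_rank V E (edge_side V T L s t)) ` (N \<times> N)" by auto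
  moreover have "finite ((\<lambda>(s, t). cut_rank V E (edge_side V T L s t)) ` (N \<times> N))"
    using finite by simp
  ultimately have "finite ?W" by (rule finite_subset)
  moreover have "cut_rank V E (edge_side V T L s t) \<in> ?W" using st nodes[OF st] by blast
  ultimately show ?thesis unfolding decomposition_width_def by simp
qed

lemma rank_width_ge_if_balanced_cuts:
  assumes n2: "2 \<le> card V"
    and cuts: "\<And>X. X \<subseteq> V \<Longrightarrow> card V \<le> 3 * card X \<Longrightarrow> card V \<le> 3 * card (V - X) \<Longrightarrow> k \<le> cut_rank V E X"
  shows "k \<le> rank_width V E"
proof -
  have "finite V" using n2 by (metis card.infinite not_numeral_le_zero)
  let ?P = "\<lambda>w. \<exists>N T L. rank_decomposition V N T L \<and> decomposition_width V E N T L = w"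
  have "\<exists>w. ?P w" using rank_decomposition_exists[OF \<open>finite V\<close> n2] by blast
  then have "?P (LEAST w. ?P w)" by (rule LeastI_ex)
  moreover have "rank_width V E = (LEAST w. ?P w)" unfolding rank_width_def using n2 by simp
  ultimately have "?P (rank_width V E)" by simp
  then obtain N T L where rd: "rank_decomposition V N T L"
    and width: "decomposition_width V E N T L = rank_width V E" by blast
  obtain s t where st: "T s t" and balanced: "card V \<le> 3 * card (edge_side V T L s t)"
      "card V \<le> 3 * card (V - edge_side V T L s t)"
    using rank_decomposition_balanced_edge[OF rd n2] .
  have "k \<le> cut_rank V E (edge_side V T L s t)" using cuts[OF edge_side_subset balanced] .
  also have "\<dots> \<le> decomposition_width V E N T L" using rd st by (rule cut_rank_le_decomposition_width)
  finally show ?thesis using width by simp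
qed

section \<open>Rank-width of the comparability grid\<close>

lemma card_comp_grid_V: "card (comp_grid_V m) = m\<^sup>2"
  unfolding comp_grid_V_def by (simp add: card_cartesian_product power2_eq_square)

lemma comp_grid_rank_width_ge:
  assumes m: "2 \<le> m" and iso: "comp_grid_iso m h E"
  shows "real m / 4 \<le> real (rank_width (h ` comp_grid_V m) E)"
proof -
  let ?V = "h ` comp_grid_V m"
  have card: "card ?V = m\<^sup>2"
    using iso card_image card_comp_grid_V unfolding comp_grid_iso_def by metis
  have "2 * 2 \<le> m * m" using m by (intro mult_le_mono) auto
  then have "2 \<le> card ?V" unfolding card by (simp add: power2_eq_square)
  then have "(m + 3) div 4 \<le> rank_width ?V E"
  proof (rule rank_width_ge_if_balanced_cuts)
    fix X assume "X \<subseteq> ?V" "card ?V \<le> 3 * card X" "card ?V \<le> 3 * card (?V - X)"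
    then have "m \<le> 4 * cut_rank ?V E X"
      using card by (intro comp_grid_balanced_cut_rank[OF iso]) auto
    then show "(m + 3) div 4 \<le> cut_rank ?V E X" by simp
  qed
  then show ?thesis by simp
qed

lemma comp_grid_iso_id: "comp_grid_iso m id comp_grid_E"
  unfolding comp_grid_iso_def by simp

lemma nat_circle_graph_rank_width_ge:
  assumes "2 \<le> m"
  obtains V :: "nat set" and E where "circle_graph V E" "card V = m\<^sup>2" "real m / 4 \<le> real (rank_width V E)"
proof
  let ?E = "\<lambda>x y. comp_grid_E (prod_decode x) (prod_decode y)"
  show "circle_graph (prod_encode ` comp_grid_V m) ?E"
    using comp_grid_circle_graph by (rule circle_graph_relabel) simp
  have "comp_grid_iso m prod_encode ?E"
    unfolding comp_grid_iso_def using inj_prod_encode by simp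
  then show "real m / 4 \<le> real (rank_width (prod_encode ` comp_grid_V m) ?E)"
    using assms by (intro comp_grid_rank_width_ge)
  show "card (prod_encode ` comp_grid_V m) = m\<^sup>2"
    using card_image[OF inj_prod_encode] card_comp_grid_V by simp
qed

lemma exists_square_below_small_o_sqrt:
  fixes f :: "nat \<Rightarrow> real"
  assumes "f \<in> o(\<lambda>n. sqrt (real n))"
  obtains m where "2 \<le> m" "f (m\<^sup>2) < real m / 4"
proof -
  have "eventually (\<lambda>n. norm (f n) \<le> 1/8 * norm (sqrt (real n))) at_top"
    using assms by (intro landau_o.smallD) simp_all
  then obtain n0 where n0: "\<And>n. n \<ge> n0 \<Longrightarrow> \<bar>f n\<bar> \<le> sqrt (real n) / 8"
    by (auto simp: eventually_at_top_linorder)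
  define m where "m = max 2 n0"
  have "n0 \<le> m\<^sup>2" unfolding m_def power2_eq_square by (metis le_square max.cobounded2 order_trans)
  then have "f (m\<^sup>2) \<le> real m / 8" using n0[of "m\<^sup>2"] by simp
  moreover have "2 \<le> m" unfolding m_def by simp
  ultimately show ?thesis using that by simp
qed

theorem mainTheorem10:
  shows "(\<forall>m::nat. m \<ge> 2 \<longrightarrow>
            circle_graph (comp_grid_V m) comp_grid_E \<and>
            card (comp_grid_V m) = m ^ 2 \<and>
            real (rank_width (comp_grid_V m) comp_grid_E) \<ge> real m / 4) \<and>
         \<not> (\<exists>f :: nat \<Rightarrow> real. f \<in> o(\<lambda>n. sqrt (real n)) \<and>
              (\<forall>(V :: nat set) E. circle_graph V E \<longrightarrow> real (rank_width V E) \<le> f (card V)))"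
proof (intro conjI allI impI notI)
  fix m :: nat assume m: "2 \<le> m"
  show "circle_graph (comp_grid_V m) comp_grid_E" by (rule comp_grid_circle_graph)
  show "card (comp_grid_V m) = m ^ 2" by (rule card_comp_grid_V)
  show "real m / 4 \<le> real (rank_width (comp_grid_V m) comp_grid_E)"
    using comp_grid_rank_width_ge[OF m comp_grid_iso_id] by simp
next
  assume "\<exists>f :: nat \<Rightarrow> real. f \<in> o(\<lambda>n. sqrt (real n)) \<and>
    (\<forall>(V :: nat set) E. circle_graph V E \<longrightarrow> real (rank_width V E) \<le> f (card V))"
  then obtain f :: "nat \<Rightarrow> real" where f: "f \<in> o(\<lambda>n. sqrt (real n))"
    and bound: "\<And>(V :: nat set) E. circle_graph V E \<Longrightarrow> real (rank_width V E) \<le> f (card V)" by blast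
  obtain m where "2 \<le> m" "f (m\<^sup>2) < real m / 4" using f by (rule exists_square_below_small_o_sqrt)
  moreover obtain V :: "nat set" and E where "circle_graph V E" "card V = m\<^sup>2"
    "real m / 4 \<le> real (rank_width V E)"
    using nat_circle_graph_rank_width_ge[OF \<open>2 \<le> m\<close>] .
  ultimately show False using bound by fastforce
qed

end
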